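(* For $n\ge 3$ let $M_n$ be the Cayley graph $\mathrm{Cay}(\mathbb{Z}_{2n},\{\pm1,\pm(n-1),n\})$. Then $Z_+(M_n)=n+2$.
   Context: $\mathrm{Cay}(\mathbb{Z}_{2n},S)$ has vertex set $\mathbb{Z}_{2n}$ with $x\sim y$ iff $x-y\in S$. $Z_+(G)$ is the positive zero forcing number: the minimum size of a set $B$ of initially black vertices such that repeated application of the rule "let $W_1,\dots,W_k$ be the vertex sets of components of $G$ minus the black vertices; a black vertex $u$ whose only white neighbour in the subgraph induced by $W_i\cup(\text{black vertices})$ is $w$ may turn $w$ black" eventually makes all vertices black. *)

theory Defs
  imports "HOL-Number_Theory.Cong"
begin

definition cay_vertices :: "nat \<Rightarrow> nat set" where
  "cay_vertices m = {0..<m}"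

definition cay_adj :: "nat \<Rightarrow> int set \<Rightarrow> nat \<Rightarrow> nat \<Rightarrow> bool" where
  "cay_adj m S x y \<longleftrightarrow> x < m \<and> y < m \<and> (\<exists>s\<in>S. [int x - int y = s] (mod int m))"

definition component_of :: "('a \<Rightarrow> 'a \<Rightarrow> bool) \<Rightarrow> 'a set \<Rightarrow> 'a \<Rightarrow> 'a set" where
  "component_of E U x = {y \<in> U. (\<lambda>a b. a \<in> U \<and> b \<in> U \<and> E a b)\<^sup>*\<^sup>* x y}"

definition components :: "('a \<Rightarrow> 'a \<Rightarrow> bool) \<Rightarrow> 'a set \<Rightarrow> 'a set set" where
  "components E U = component_of E U ` U"

definition pzf_step :: "'a set \<Rightarrow> ('a \<Rightarrow> 'a \<Rightarrow> bool) \<Rightarrow> 'a set \<Rightarrow> 'a set \<Rightarrow> bool" where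
  "pzf_step V E B B' \<longleftrightarrow>
     (\<exists>W \<in> components E (V - B). \<exists>u \<in> B. \<exists>w \<in> W.
        E u w \<and> (\<forall>v \<in> W. E u v \<longrightarrow> v = w) \<and> B' = insert w B)"

definition pos_zero_forcing_set :: "'a set \<Rightarrow> ('a \<Rightarrow> 'a \<Rightarrow> bool) \<Rightarrow> 'a set \<Rightarrow> bool" where
  "pos_zero_forcing_set V E B \<longleftrightarrow> B \<subseteq> V \<and> (pzf_step V E)\<^sup>*\<^sup>* B V"

definition Zplus :: "'a set \<Rightarrow> ('a \<Rightarrow> 'a \<Rightarrow> bool) \<Rightarrow> nat" where
  "Zplus V E = (LEAST k. \<exists>B. pos_zero_forcing_set V E B \<and> card B = k)"

end

theory Submission
  imports Defs
begin

text \<open>\<open>M\<^sub>n\<close> is the cycle \<open>C\<^sub>n\<close> with every vertex \<open>j\<close> blown up into the adjacent pair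
  \<open>{j, j + n}\<close> of closed twins. Black \<open>{0..<n+2}\<close> (both copies of the residues \<open>0, 1\<close>
  and one copy of every other residue) forces the remaining copies one after another along the
  cycle, so \<open>Z\<^sub>+(M\<^sub>n) \<le> n + 2\<close>. Conversely, closed twins that are both white can never be forced,
  so a positive zero forcing set meets every pair. If it contains at most one full pair, the white
  vertices induce a connected subgraph (a cycle with at most one vertex removed) and every black
  vertex sees white vertices in at least two of the three neighbouring pairs, so no force is
  possible at all; hence a positive zero forcing set other than the whole vertex set contains
  two full pairs and at least \<open>n + 2\<close> vertices.\<close>

lemma component_of_refl: "x \<in> U \<Longrightarrow> x \<in> component_of E U x"
  unfolding component_of_def by simp

lemma component_of_subset: "component_of E U x \<subseteq> U"
  unfolding component_of_def by auto

lemma component_of_step: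
  "y \<in> component_of E U x \<Longrightarrow> z \<in> U \<Longrightarrow> E y z \<Longrightarrow> z \<in> component_of E U x"
  unfolding component_of_def by (auto intro: rtranclp.rtrancl_into_rtrancl)

lemma component_of_trans:
  "y \<in> component_of E U x \<Longrightarrow> z \<in> component_of E U y \<Longrightarrow> z \<in> component_of E U x"
  unfolding component_of_def by (auto intro: rtranclp_trans)

lemma component_of_sym:
  assumes "symp E" "x \<in> U" "y \<in> component_of E U x"
  shows "x \<in> component_of E U y"
proof -
  have "symp (\<lambda>a b. a \<in> U \<and> b \<in> U \<and> E a b)"
    using assms(1) by (auto intro: sympI dest: sympD)
  then show ?thesis
    using assms(2,3) unfolding component_of_def by (auto dest: sympD[OF symp_rtranclp])
qed

lemma pzf_stepI:
  assumes "u \<in> B" "w \<in> V - B" "E u w" "\<forall>v\<in>V - B. E u v \<longrightarrow> v = w"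
  shows "pzf_step V E B (insert w B)"
  unfolding pzf_step_def
proof (intro bexI conjI)
  let ?W = "component_of E (V - B) w"
  show "?W \<in> components E (V - B)"
    using assms(2) unfolding components_def by (rule imageI)
  show "w \<in> ?W"
    using assms(2) by (rule component_of_refl)
  show "\<forall>v\<in>?W. E u v \<longrightarrow> v = w"
    using assms(4) component_of_subset[of E "V - B" w] by blast
qed (use assms(1,3) in auto)

definition closed_twins :: "('a \<Rightarrow> 'a \<Rightarrow> bool) \<Rightarrow> 'a \<Rightarrow> 'a \<Rightarrow> bool" where
  "closed_twins E v v' \<longleftrightarrow>
     v \<noteq> v' \<and> E v v' \<and> E v' v \<and> (\<forall>u. u \<noteq> v \<and> u \<noteq> v' \<longrightarrow> (E u v \<longleftrightarrow> E u v'))"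

lemma closed_twins_sym: "closed_twins E v v' \<Longrightarrow> closed_twins E v' v"
  unfolding closed_twins_def by blast

lemma pzf_step_closed_twin_stays_white:
  assumes twins: "closed_twins E v v'" and "v' \<in> V" "v \<notin> B" "v' \<notin> B"
    and step: "pzf_step V E B B'"
  shows "v \<notin> B'"
proof -
  obtain W u w where W: "W \<in> components E (V - B)" and u: "u \<in> B" and w: "w \<in> W"
    and Euw: "E u w" and unique: "\<forall>v\<in>W. E u v \<longrightarrow> v = w" and B': "B' = insert w B"
    using step unfolding pzf_step_def by blast
  obtain x where W_eq: "W = component_of E (V - B) x"
    using W unfolding components_def by blast
  have "w \<noteq> v"
  proof
    assume "w = v"
    have "v' \<in> W"
      using component_of_step[OF w[unfolded W_eq], of v'] \<open>w = v\<close> twins assms(2,4)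
      unfolding W_eq closed_twins_def by blast
    moreover have "E u v'"
      using Euw \<open>w = v\<close> twins u assms(3,4) unfolding closed_twins_def by metis
    ultimately have "v' = v"
      using unique \<open>w = v\<close> by blast
    then show False
      using twins unfolding closed_twins_def by blast
  qed
  then show ?thesis
    using B' assms(3) by blast
qed

lemma rtranclp_pzf_step_closed_twins_stay_white:
  assumes "(pzf_step V E)\<^sup>*\<^sup>* B C" "closed_twins E v v'" "v \<in> V" "v' \<in> V" "v \<notin> B" "v' \<notin> B"
  shows "v \<notin> C \<and> v' \<notin> C"
  using assms(1,5,6)
proof induction
  case (step C D)
  then show ?case
    using pzf_step_closed_twin_stays_white[OF assms(2) assms(4)]
      pzf_step_closed_twin_stays_white[OF closed_twins_sym[OF assms(2)] assms(3)] by blast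
qed simp

lemma pos_zero_forcing_set_meets_closed_twins:
  assumes "pos_zero_forcing_set V E B" "closed_twins E v v'" "v \<in> V" "v' \<in> V"
  shows "v \<in> B \<or> v' \<in> B"
  using assms rtranclp_pzf_step_closed_twins_stay_white unfolding pos_zero_forcing_set_def by metis

lemma no_pzf_step_if_white_connected:
  assumes connected: "\<forall>x\<in>V - B. \<forall>y\<in>V - B. y \<in> component_of E (V - B) x"
    and two_white: "\<forall>u\<in>B. \<exists>w\<^sub>1\<in>V - B. \<exists>w\<^sub>2\<in>V - B. w\<^sub>1 \<noteq> w\<^sub>2 \<and> E u w\<^sub>1 \<and> E u w\<^sub>2"
  shows "\<not> pzf_step V E B B'"
proof
  assume "pzf_step V E B B'"
  then obtain x u w where x: "x \<in> V - B" and u: "u \<in> B"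
    and unique: "\<forall>v\<in>component_of E (V - B) x. E u v \<longrightarrow> v = w"
    unfolding pzf_step_def components_def by blast
  obtain w\<^sub>1 w\<^sub>2 where w: "w\<^sub>1 \<in> V - B" "w\<^sub>2 \<in> V - B" "w\<^sub>1 \<noteq> w\<^sub>2" "E u w\<^sub>1" "E u w\<^sub>2"
    using two_white u by blast
  have "w\<^sub>1 \<in> component_of E (V - B) x" "w\<^sub>2 \<in> component_of E (V - B) x"
    using connected x w(1,2) by blast+
  then have "w\<^sub>1 = w" "w\<^sub>2 = w"
    using unique w(4,5) by blast+
  with w(3) show False
    by simp
qed

lemma int_dvd_iff_small_multiple:
  fixes t m :: int
  assumes "m > 0" "\<bar>t\<bar> < 2 * m"
  shows "m dvd t \<longleftrightarrow> t \<in> {0, m, -m}"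
proof
  assume "m dvd t"
  then obtain k where t: "t = m * k" by auto
  have "m * \<bar>k\<bar> < m * 2" using assms t by (simp add: abs_mult)
  then have "\<bar>k\<bar> < 2" using assms(1) by (simp add: mult_less_cancel_left_pos)
  then have "k \<in> {-1, 0, 1}" by auto
  then show "t \<in> {0, m, -m}" using t by auto
qed auto

abbreviation M_adj :: "nat \<Rightarrow> nat \<Rightarrow> nat \<Rightarrow> bool" where
  "M_adj n \<equiv> cay_adj (2*n) {1, -1, int n - 1, -(int n - 1), int n}"

definition cycle_closed_adj :: "nat \<Rightarrow> nat \<Rightarrow> nat \<Rightarrow> bool" where
  "cycle_closed_adj n a b \<longleftrightarrow> a = b \<or> b = Suc a mod n \<or> a = Suc b mod n"

lemma cycle_closed_adj_iff:
  assumes "a < n" "b < n"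
  shows "cycle_closed_adj n a b \<longleftrightarrow>
    a = b \<or> b = a + 1 \<or> a = b + 1 \<or> (a = 0 \<and> b = n - 1) \<or> (b = 0 \<and> a = n - 1)"
  using assms unfolding cycle_closed_adj_def by (auto simp: mod_Suc)

lemma M_connection_set_cases:
  fixes a b :: nat and k :: int
  assumes "n \<ge> 3" "a < n" "b < n" "k \<in> {-1,0,1}"
  shows "(\<exists>s\<in>{1, -1, int n - 1, -(int n - 1), int n}. int a - int b + k * int n - s \<in> {0, 2 * int n, - (2 * int n)})
     \<longleftrightarrow> (a \<noteq> b \<or> k \<noteq> 0) \<and> cycle_closed_adj n a b"
  using assms(4) unfolding cycle_closed_adj_iff[OF assms(2,3)]
  by (elim insertE emptyE) (use assms(1-3) in auto)

lemma M_adj_iff: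
  assumes "n \<ge> 3"
  shows "M_adj n x y \<longleftrightarrow>
    x < 2*n \<and> y < 2*n \<and> x \<noteq> y \<and> cycle_closed_adj n (x mod n) (y mod n)"
proof (cases "x < 2*n \<and> y < 2*n")
  case True
  define k where "k = int (x div n) - int (y div n)"
  have "x div n < 2" "y div n < 2" using True by (simp_all add: less_mult_imp_div_less)
  then have k: "k \<in> {-1, 0, 1}" unfolding k_def by auto
  have int_mod_div: "int z = int (z mod n) + int (z div n) * int n" for z
    by (metis mod_div_mult_eq of_nat_add of_nat_mult)
  have diff: "int x - int y = int (x mod n) - int (y mod n) + k * int n"
    unfolding k_def by (subst (1 2) int_mod_div) (simp add: algebra_simps)
  let ?S = "{1, -1, int n - 1, -(int n - 1), int n}"
  have "[int x - int y = s] (mod int (2*n)) \<longleftrightarrow> int x - int y - s \<in> {0, 2 * int n, - (2 * int n)}"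
    if "s \<in> ?S" for s
    unfolding cong_iff_dvd_diff using True that assms by (subst int_dvd_iff_small_multiple) auto
  then have "cay_adj (2*n) ?S x y \<longleftrightarrow>
      (\<exists>s\<in>?S. int (x mod n) - int (y mod n) + k * int n - s \<in> {0, 2 * int n, - (2 * int n)})"
    using True unfolding cay_adj_def diff by (metis (no_types, lifting))
  also have "\<dots> \<longleftrightarrow> (x mod n \<noteq> y mod n \<or> k \<noteq> 0) \<and> cycle_closed_adj n (x mod n) (y mod n)"
    using assms by (intro M_connection_set_cases k) auto
  also have "x mod n \<noteq> y mod n \<or> k \<noteq> 0 \<longleftrightarrow> x \<noteq> y"
    unfolding k_def by (metis div_mult_mod_eq eq_iff_diff_eq_0 of_nat_eq_iff)
  finally show ?thesis using True by simp
qed (auto simp: cay_adj_def)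

lemma symp_M_adj:
  assumes "n \<ge> 3"
  shows "symp (M_adj n)"
  unfolding symp_def M_adj_iff[OF assms] cycle_closed_adj_def by auto

lemma M_closed_twins:
  assumes "n \<ge> 3" "j < n"
  shows "closed_twins (M_adj n) j (j + n)"
  using assms(2) unfolding closed_twins_def M_adj_iff[OF assms(1)] cycle_closed_adj_def by auto

lemma M_force_next:
  assumes "n \<ge> 3" "k + 3 \<le> n"
  shows "pzf_step (cay_vertices (2*n)) (M_adj n) {0..<n+2+k} (insert (n+2+k) {0..<n+2+k})"
proof (rule pzf_stepI)
  have mod_n: "v mod n = v - n" if "n \<le> v" "v < 2*n" for v
    using that by (simp add: le_mod_geq)
  show "M_adj n (k+1) (n+2+k)"
    using assms(2) unfolding M_adj_iff[OF assms(1)] by (simp add: cycle_closed_adj_iff mod_n)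
  show "\<forall>v\<in>cay_vertices (2*n) - {0..<n+2+k}. M_adj n (k+1) v \<longrightarrow> v = n+2+k"
    using assms(2) unfolding M_adj_iff[OF assms(1)]
    by (auto simp: cay_vertices_def cycle_closed_adj_iff mod_n; arith)
qed (use assms in \<open>auto simp: cay_vertices_def\<close>)

lemma M_pos_zero_forcing_set:
  assumes "n \<ge> 3"
  shows "pos_zero_forcing_set (cay_vertices (2*n)) (M_adj n) {0..<n+2}"
proof -
  have reach: "(pzf_step (cay_vertices (2*n)) (M_adj n))\<^sup>*\<^sup>* {0..<n+2} {0..<n+2+k}"
    if "k + 2 \<le> n" for k
    using that
  proof (induction k)
    case (Suc k)
    have "{0..<n+2+Suc k} = insert (n+2+k) {0..<n+2+k}"
      by auto
    then show ?case
      using Suc M_force_next[OF assms, of k] by (simp add: rtranclp.rtrancl_into_rtrancl)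
  qed simp
  have "{0..<n+2+(n-2)} = cay_vertices (2*n)"
    using assms unfolding cay_vertices_def by auto
  with reach[of "n - 2"] assms show ?thesis
    unfolding pos_zero_forcing_set_def by (simp add: cay_vertices_def)
qed

locale M_stalling_set =
  fixes n :: nat and B :: "nat set" and f :: nat
  assumes n_ge_3: "n \<ge> 3"
    and subset: "B \<subseteq> cay_vertices (2*n)"
    and covers: "\<forall>j<n. j \<in> B \<or> j + n \<in> B"
    and f_lt: "f < n"
    and full_only_f: "\<forall>j<n. j \<noteq> f \<longrightarrow> j \<notin> B \<or> j + n \<notin> B"
begin

abbreviation white :: "nat set" where
  "white \<equiv> cay_vertices (2*n) - B"

definition white_vertex :: "nat \<Rightarrow> nat" where
  "white_vertex j = (if j \<in> B then j + n else j)"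

lemma white_vertex_mod: "j < n \<Longrightarrow> white_vertex j mod n = j"
  unfolding white_vertex_def by simp

lemma white_vertex_white: "j < n \<Longrightarrow> j \<noteq> f \<Longrightarrow> white_vertex j \<in> white"
  using full_only_f unfolding white_vertex_def cay_vertices_def by auto

lemma white_vertex_mod_eq: "x \<in> white \<Longrightarrow> white_vertex (x mod n) = x"
  using covers unfolding white_vertex_def cay_vertices_def
  by (cases "x < n") (auto simp: le_mod_geq dest: spec[of _ "x - n"])

lemma white_adj_component:
  assumes "x \<in> white" "y \<in> white" "cycle_closed_adj n (x mod n) (y mod n)"
  shows "y \<in> component_of (M_adj n) white x"
proof (cases "x = y")
  case True
  then show ?thesis
    using assms(1) by (simp add: component_of_refl)
next
  case False
  then have "M_adj n x y"
    using assms unfolding M_adj_iff[OF n_ge_3] cay_vertices_def by simp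
  then show ?thesis
    using assms(1,2) component_of_refl component_of_step by metis
qed

lemma start_white: "white_vertex (Suc f mod n) \<in> white"
  using n_ge_3 f_lt by (intro white_vertex_white) (auto simp: mod_Suc)

lemma walk_avoids_f: "t < n - 1 \<Longrightarrow> (Suc f + t) mod n \<noteq> f"
  using f_lt by (cases "Suc f + t < n") (auto simp: le_mod_geq)

text \<open>Walking once around the cycle from the successor of \<open>f\<close> visits every residue except \<open>f\<close>.\<close>

lemma white_walk:
  assumes "t < n - 1"
  shows "white_vertex ((Suc f + t) mod n) \<in> component_of (M_adj n) white (white_vertex (Suc f mod n))"
  using assms
proof (induction t)
  case 0
  then show ?case
    using walk_avoids_f[of 0] white_vertex_white n_ge_3 by (simp add: component_of_refl)
next
  case (Suc t)
  let ?a = "(Suc f + t) mod n" and ?b = "(Suc f + Suc t) mod n"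
  have a: "?a < n" "?a \<noteq> f" and b: "?b < n" "?b \<noteq> f"
    using Suc.prems n_ge_3 walk_avoids_f[of t] walk_avoids_f[of "Suc t"] by auto
  have "white_vertex ?b \<in> component_of (M_adj n) white (white_vertex ?a)"
  proof (rule white_adj_component)
    show "white_vertex ?a \<in> white" "white_vertex ?b \<in> white"
      using white_vertex_white a b by blast+
    have "cycle_closed_adj n ?a ?b"
      unfolding cycle_closed_adj_def by (simp add: mod_Suc_eq)
    then show "cycle_closed_adj n (white_vertex ?a mod n) (white_vertex ?b mod n)"
      by (simp only: white_vertex_mod a(1) b(1))
  qed
  with Suc show ?case
    by (simp add: component_of_trans)
qed

lemma white_reaches_start:
  assumes x: "x \<in> white"
  shows "x \<in> component_of (M_adj n) white (white_vertex (Suc f mod n))"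
proof (cases "x mod n = f")
  case True
  have "cycle_closed_adj n (white_vertex (Suc f mod n) mod n) (x mod n)"
    using True n_ge_3 walk_avoids_f[of 0] unfolding cycle_closed_adj_def
    by (simp add: white_vertex_mod)
  then show ?thesis
    using white_adj_component start_white x by blast
next
  case False
  define t where "t = (x mod n + n - Suc f) mod n"
  have "(Suc f + t) mod n = (x mod n + n) mod n"
    unfolding t_def mod_add_right_eq using f_lt by (simp add: add.commute)
  then have t: "(Suc f + t) mod n = x mod n"
    by simp
  moreover have "t < n - 1"
  proof -
    have "t \<noteq> n - 1"
      using t False f_lt by auto
    moreover have "t < n"
      using n_ge_3 unfolding t_def by simp
    ultimately show ?thesis
      by linarith
  qed
  ultimately show ?thesis
    using white_walk white_vertex_mod_eq[OF x] by metis
qed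

lemma white_connected: "\<forall>x\<in>white. \<forall>y\<in>white. y \<in> component_of (M_adj n) white x"
proof (intro ballI)
  fix x y
  assume "x \<in> white" "y \<in> white"
  let ?x\<^sub>0 = "white_vertex (Suc f mod n)"
  have "?x\<^sub>0 \<in> component_of (M_adj n) white x"
    using white_reaches_start[OF \<open>x \<in> white\<close>] start_white component_of_sym[OF symp_M_adj[OF n_ge_3]]
    by blast
  moreover have "y \<in> component_of (M_adj n) white ?x\<^sub>0"
    using white_reaches_start[OF \<open>y \<in> white\<close>] .
  ultimately show "y \<in> component_of (M_adj n) white x"
    by (rule component_of_trans)
qed

lemma M_adj_white_vertex:
  assumes "u \<in> B" "r < n" "r \<noteq> f" "cycle_closed_adj n (u mod n) r"
  shows "M_adj n u (white_vertex r)"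
proof -
  have "white_vertex r \<in> white" "u \<in> cay_vertices (2*n)"
    using white_vertex_white assms subset by blast+
  then show ?thesis
    using assms white_vertex_mod unfolding M_adj_iff[OF n_ge_3] cay_vertices_def by auto
qed

lemma two_white_neighbours:
  assumes "u \<in> B"
  shows "\<exists>w\<^sub>1\<in>white. \<exists>w\<^sub>2\<in>white. w\<^sub>1 \<noteq> w\<^sub>2 \<and> M_adj n u w\<^sub>1 \<and> M_adj n u w\<^sub>2"
proof -
  define i where "i = u mod n"
  define p where "p = (if i = 0 then n - 1 else i - 1)"
  define q where "q = (if i = n - 1 then 0 else i + 1)"
  have i: "i < n"
    using n_ge_3 unfolding i_def by simp
  have near: "cycle_closed_adj n i r" "r < n" if "r \<in> {i, p, q}" for r
    using that i n_ge_3 unfolding p_def q_def by (auto simp: cycle_closed_adj_iff)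
  have distinct: "i \<noteq> p" "i \<noteq> q" "p \<noteq> q"
    using i n_ge_3 unfolding p_def q_def by auto
  obtain r\<^sub>1 r\<^sub>2 where r: "r\<^sub>1 \<in> {i, p, q}" "r\<^sub>2 \<in> {i, p, q}" "r\<^sub>1 \<noteq> r\<^sub>2" "r\<^sub>1 \<noteq> f" "r\<^sub>2 \<noteq> f"
  proof -
    consider "f = i" | "f = p" | "f \<noteq> i" "f \<noteq> p"
      by blast
    then show ?thesis
    proof cases
      case 1
      then show ?thesis
        using that[of p q] distinct by auto
    next
      case 2
      then show ?thesis
        using that[of i q] distinct by auto
    next
      case 3
      then show ?thesis
        using that[of i p] distinct by auto
    qed
  qed
  have "white_vertex r\<^sub>1 \<noteq> white_vertex r\<^sub>2"
    using r near(2) white_vertex_mod by metis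
  moreover have "white_vertex r \<in> white \<and> M_adj n u (white_vertex r)" if "r \<in> {i, p, q}" "r \<noteq> f" for r
    using that near white_vertex_white M_adj_white_vertex[OF assms] unfolding i_def by blast
  ultimately show ?thesis
    using r by blast
qed

lemma no_pzf_step: "\<not> pzf_step (cay_vertices (2*n)) (M_adj n) B B'"
  by (rule no_pzf_step_if_white_connected) (use white_connected two_white_neighbours in blast)+

end

lemma card_ge_if_two_full_residues:
  fixes B :: "nat set"
  assumes "finite B" "\<forall>j<n. j \<in> B \<or> j + n \<in> B"
    and "i < n" "k < n" "i \<noteq> k" "{i, i + n, k, k + n} \<subseteq> B"
  shows "n + 2 \<le> card B"
proof -
  define g where "g j = (if j \<in> B then j else j + n)" for j
  have "inj_on g {..<n}"
    by (rule inj_on_inverseI[where g = "\<lambda>x. x mod n"]) (auto simp: g_def)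
  then have "card (g ` {..<n}) = n"
    by (simp add: card_image)
  moreover have "i + n \<notin> g ` {..<n}" "k + n \<notin> g ` {..<n}"
    using assms(3-6) unfolding g_def by auto
  ultimately have "card (insert (i + n) (insert (k + n) (g ` {..<n}))) = n + 2"
    using assms(5) by simp
  moreover have "insert (i + n) (insert (k + n) (g ` {..<n})) \<subseteq> B"
    using assms(2,6) unfolding g_def by auto
  ultimately show ?thesis
    using assms(1) card_mono by metis
qed

lemma M_pos_zero_forcing_set_card_ge:
  assumes n: "n \<ge> 3" and B: "pos_zero_forcing_set (cay_vertices (2*n)) (M_adj n) B"
  shows "n + 2 \<le> card B"
proof (rule ccontr)
  assume small: "\<not> n + 2 \<le> card B"
  have subset: "B \<subseteq> cay_vertices (2*n)"
    and forces: "(pzf_step (cay_vertices (2*n)) (M_adj n))\<^sup>*\<^sup>* B (cay_vertices (2*n))"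
    using B unfolding pos_zero_forcing_set_def by auto
  have finite: "finite B"
    using subset finite_subset unfolding cay_vertices_def by blast
  have covers: "\<forall>j<n. j \<in> B \<or> j + n \<in> B"
    using pos_zero_forcing_set_meets_closed_twins[OF B M_closed_twins[OF n]]
    unfolding cay_vertices_def by simp
  obtain f where "f < n" "\<forall>j<n. j \<noteq> f \<longrightarrow> j \<notin> B \<or> j + n \<notin> B"
  proof (cases "\<exists>f<n. f \<in> B \<and> f + n \<in> B")
    case True
    then obtain f where f: "f < n" "f \<in> B" "f + n \<in> B"
      by blast
    have "\<forall>j<n. j \<noteq> f \<longrightarrow> j \<notin> B \<or> j + n \<notin> B"
    proof (intro allI impI, rule ccontr)
      fix j
      assume "j < n" "j \<noteq> f" "\<not> (j \<notin> B \<or> j + n \<notin> B)"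
      then have "n + 2 \<le> card B"
        using f by (intro card_ge_if_two_full_residues[OF finite covers, of j f]) auto
      with small show False
        by simp
    qed
    with f(1) show ?thesis
      by (rule that)
  next
    case False
    then show ?thesis
      using that[of 0] n by auto
  qed
  then interpret M_stalling_set n B f
    using n subset covers by unfold_locales
  have "B = cay_vertices (2*n)"
    using forces no_pzf_step by (cases rule: converse_rtranclpE) auto
  then show False
    using small n unfolding cay_vertices_def by simp
qed

theorem mainTheorem18:
  fixes n :: nat
  assumes "n \<ge> 3"
  shows "Zplus (cay_vertices (2*n))
           (cay_adj (2*n) {1, -1, int n - 1, -(int n - 1), int n}) = n + 2"
  unfolding Zplus_def
proof (rule Least_equality)
  show "\<exists>B. pos_zero_forcing_set (cay_vertices (2*n)) (M_adj n) B \<and> card B = n + 2"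
    using M_pos_zero_forcing_set[OF assms] by auto
qed (use M_pos_zero_forcing_set_card_ge[OF assms] in blast)

end
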